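(* $w^\ast(3,3)\ge 414$. More precisely, the 3-coloring of $\{1,\dots,413\}$ in which the color of $n$ is the $n$-th letter of the following word (the concatenation of the six lines, of lengths $70,70,70,70,70,63$) contains no monochromatic double 3-term arithmetic progression: 0101102210100201200100221221010010220010112011211202210112122112202210 0110010220201122022002202001012212112122001001120121100110020022002110 2001101001121120210020011210201121122112122010110100110102201220201221 1210021122112122112200110011212200202202001212212112212200110010110012 0211212200220100112202200220200122102212211211002101220022001001100221 211010010110020022110010110010221211020220200220221001122011211
   Context: An increasing sequence of positive integers $a_1<a_2<\cdots$ (finite or infinite) contains a double 3-term arithmetic progression if there are indices $i<j<k$ with $i+k=2j$ and $a_i+a_k=2a_j$. For a coloring of an interval, each color class is regarded as an increasing sequence by listing its elements in increasing order; a monochromatic double 3-term arithmetic progression is a double 3-term arithmetic progression in some color class. $w^\ast(r,3)$ denotes the least integer $N$, if it exists, such that every $r$-coloring of $\{1,\dots,N\}$ has a monochromatic double 3-term arithmetic progression; $w^\ast(3,3)\ge414$ means that either it does not exist or it is at least $414$. *)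

theory Defs
  imports Main
begin

definition has_double_3AP :: "nat list \<Rightarrow> bool" where
  "has_double_3AP xs \<longleftrightarrow>
     (\<exists>i j k. i < j \<and> j < k \<and> k < length xs \<and> i + k = 2 * j \<and>
              xs ! i + xs ! k = 2 * xs ! j)"

definition color_class :: "(nat \<Rightarrow> nat) \<Rightarrow> nat \<Rightarrow> nat \<Rightarrow> nat list" where
  "color_class c N a = sorted_list_of_set {n \<in> {1..N}. c n = a}"

definition mono_double_3AP :: "(nat \<Rightarrow> nat) \<Rightarrow> nat \<Rightarrow> bool" where
  "mono_double_3AP c N \<longleftrightarrow> (\<exists>a. has_double_3AP (color_class c N a))"

definition is_coloring :: "nat \<Rightarrow> nat \<Rightarrow> (nat \<Rightarrow> nat) \<Rightarrow> bool" where
  "is_coloring r N c \<longleftrightarrow> (\<forall>n \<in> {1..N}. c n < r)"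

definition word413 :: string where
  "word413 =
     ''0101102210100201200100221221010010220010112011211202210112122112202210'' @
     ''0110010220201122022002202001012212112122001001120121100110020022002110'' @
     ''2001101001121120210020011210201121122112122010110100110102201220201221'' @
     ''1210021122112122112200110011212200202202001212212112212200110010110012'' @
     ''0211212200220100112202200220200122102212211211002101220022001001100221'' @
     ''211010010110020022110010110010221211020220200220221001122011211''"

definition col413 :: "nat \<Rightarrow> nat" where
  "col413 n = of_char (word413 ! (n - 1)) - 48"

end

theory Submission
  imports Defs
begin

text \<open>The coloring is verified by computation. A double 3-AP with middle index j and gap d
  pairs the d-th entry before position j with the d-th entry after it, so scanning a color
  class while keeping the scanned prefix reversed reduces the search for progressions with
  middle term m to one pass over \<open>zip prefix suffix\<close>. Restricting a coloring of {1..413}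
  to {1..N} turns each color class into a prefix of the old one, and prefixes of lists free
  of double 3-APs are free of them, so the one coloring also settles every N < 414.\<close>

text \<open>\<open>p\<close> is the already scanned part in reverse order, so \<open>zip p xs\<close> pairs the entries
  at equal distance on both sides of the current middle term.\<close>
fun no_double_3AP_from :: "nat list \<Rightarrow> nat list \<Rightarrow> bool" where
  "no_double_3AP_from p [] = True"
| "no_double_3AP_from p (m # xs) \<longleftrightarrow>
     list_all (\<lambda>(x, y). x + y \<noteq> 2 * m) (zip p xs) \<and> no_double_3AP_from (m # p) xs"

lemma no_double_3AP_from_sound:
  assumes "no_double_3AP_from p xs"
    and "i < j" "j < k" "k < length p + length xs" "length p \<le> j" "i + k = 2 * j"
  shows "(rev p @ xs) ! i + (rev p @ xs) ! k \<noteq> 2 * (rev p @ xs) ! j"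
  using assms
proof (induction xs arbitrary: p j)
  case Nil
  then show ?case by simp
next
  case (Cons m xs)
  show ?case
  proof (cases "j = length p")
    case True
    define d where "d = j - Suc i"
    have d: "d < length p" "d < length xs" "i = length p - Suc d" "k = length p + Suc d"
      using Cons.prems True by (auto simp: d_def)
    have "list_all (\<lambda>(x, y). x + y \<noteq> 2 * m) (zip p xs)"
      using Cons.prems(1) by simp
    then have "p ! d + xs ! d \<noteq> 2 * m"
      using d(1,2) by (simp add: list_all_length)
    moreover have "(rev p @ m # xs) ! i = p ! d"
    proof -
      have "i < length p" using d(1,3) by simp
      then have "(rev p @ m # xs) ! i = p ! (length p - Suc i)"
        by (simp add: nth_append rev_nth)
      also have "length p - Suc i = d" using d(1,3) by simp
      finally show ?thesis .
    qed
    moreover have "(rev p @ m # xs) ! k = xs ! d" "(rev p @ m # xs) ! j = m"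
      using d(4) True by (simp_all add: nth_append)
    ultimately show ?thesis by simp
  next
    case False
    then have "(rev (m # p) @ xs) ! i + (rev (m # p) @ xs) ! k \<noteq> 2 * (rev (m # p) @ xs) ! j"
      using Cons.prems by (intro Cons.IH) auto
    then show ?thesis by simp
  qed
qed

lemma not_has_double_3AP_if_no_double_3AP_from:
  "no_double_3AP_from [] xs \<Longrightarrow> \<not> has_double_3AP xs"
  unfolding has_double_3AP_def using no_double_3AP_from_sound[of "[]" xs] by fastforce

lemma has_double_3AP_append:
  "has_double_3AP xs \<Longrightarrow> has_double_3AP (xs @ ys)"
  unfolding has_double_3AP_def
proof (elim exE conjE)
  fix i j k
  assume "i < j" "j < k" "k < length xs" "i + k = 2 * j" "xs ! i + xs ! k = 2 * xs ! j"
  then show "\<exists>i j k. i < j \<and> j < k \<and> k < length (xs @ ys) \<and> i + k = 2 * j \<and>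
      (xs @ ys) ! i + (xs @ ys) ! k = 2 * (xs @ ys) ! j"
    by (intro exI[of _ i] exI[of _ j] exI[of _ k]) (simp add: nth_append)
qed

lemma color_class_eq_filter: "color_class c N a = filter (\<lambda>n. c n = a) [1..<Suc N]"
  unfolding color_class_def
  by (rule sym, rule sorted_distinct_set_unique) (auto simp del: upt_Suc intro: sorted_wrt_filter)

lemma color_class_append:
  assumes "N \<le> M"
  shows "color_class c M a = color_class c N a @ filter (\<lambda>n. c n = a) [Suc N..<Suc M]"
proof -
  have "[1..<Suc M] = [1..<Suc N] @ [Suc N..<Suc M]"
    using assms upt_add_eq_append[of 1 "Suc N" "M - N"] by simp
  then show ?thesis by (simp add: color_class_eq_filter)
qed

lemma mono_double_3AP_mono:
  "mono_double_3AP c N \<Longrightarrow> N \<le> M \<Longrightarrow> mono_double_3AP c M"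
  unfolding mono_double_3AP_def using color_class_append has_double_3AP_append by metis

lemma is_coloring_mono: "is_coloring r M c \<Longrightarrow> N \<le> M \<Longrightarrow> is_coloring r N c"
  unfolding is_coloring_def by auto

lemma color_class_eq_Nil:
  "is_coloring r N c \<Longrightarrow> r \<le> a \<Longrightarrow> color_class c N a = []"
  unfolding is_coloring_def color_class_eq_filter filter_empty_conv
  by (metis atLeastAtMost_iff atLeastLessThan_iff less_Suc_eq_le not_le order.strict_trans2 set_upt)

fun positions :: "('a \<Rightarrow> bool) \<Rightarrow> nat \<Rightarrow> 'a list \<Rightarrow> nat list" where
  "positions P k [] = []"
| "positions P k (x # xs) = (if P x then k # positions P (k + 1) xs else positions P (k + 1) xs)"

lemma positions_eq_filter:
  "positions P k xs = filter (\<lambda>n. P (xs ! (n - k))) [k..<k + length xs]"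
proof (induction xs arbitrary: k)
  case Nil
  then show ?case by simp
next
  case (Cons x xs)
  have "[k..<k + length (x # xs)] = k # [Suc k..<Suc k + length xs]"
    by (subst upt_conv_Cons) simp_all
  moreover have "filter (\<lambda>n. P ((x # xs) ! (n - k))) [Suc k..<Suc k + length xs]
      = filter (\<lambda>n. P (xs ! (n - Suc k))) [Suc k..<Suc k + length xs]"
    by (rule filter_cong) (auto simp: nth_Cons')
  ultimately show ?case
    using Cons.IH[of "Suc k"] by simp
qed

lemma length_word413: "length word413 = 413"
  by (simp add: word413_def)

lemma color_class_col413:
  "color_class col413 413 a = positions (\<lambda>ch. of_char ch - 48 = a) 1 word413"
  by (simp add: color_class_eq_filter positions_eq_filter length_word413 col413_def
      del: upt_Suc)

lemma is_coloring_col413: "is_coloring 3 413 col413"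
  unfolding is_coloring_def
proof
  fix n :: nat
  assume "n \<in> {1..413}"
  then have "word413 ! (n - 1) \<in> set word413"
    using length_word413 by (intro nth_mem) auto
  moreover have "list_all (\<lambda>ch. of_char ch - 48 < (3::nat)) word413"
    by (simp add: word413_def)
  ultimately show "col413 n < 3"
    by (simp add: col413_def list_all_iff)
qed

text \<open>\<open>One_nat_def\<close> would unfold the start position 1 to \<open>Suc 0\<close> and produce
  unary position numbers, which makes the computation infeasible.\<close>
lemma no_double_3AP_from_col413:
  "no_double_3AP_from [] (positions (\<lambda>ch. of_char ch - 48 = (0::nat)) 1 word413)"
  "no_double_3AP_from [] (positions (\<lambda>ch. of_char ch - 48 = (1::nat)) 1 word413)"
  "no_double_3AP_from [] (positions (\<lambda>ch. of_char ch - 48 = (2::nat)) 1 word413)"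
  by (simp_all del: One_nat_def add: word413_def)

lemma not_mono_double_3AP_col413: "\<not> mono_double_3AP col413 413"
proof -
  have "\<not> has_double_3AP (color_class col413 413 a)" for a
  proof (cases "a < 3")
    case True
    then consider "a = 0" | "a = 1" | "a = 2" by linarith
    then show ?thesis
      by cases (use no_double_3AP_from_col413 in
          \<open>simp_all add: color_class_col413 not_has_double_3AP_if_no_double_3AP_from\<close>)
  next
    case False
    then show ?thesis
      using color_class_eq_Nil[OF is_coloring_col413] by (simp add: has_double_3AP_def)
  qed
  then show ?thesis
    unfolding mono_double_3AP_def by blast
qed

theorem theorem2:
  shows "length word413 = 413 \<and> is_coloring 3 413 col413 \<and> \<not> mono_double_3AP col413 413
         \<and> (\<forall>N < 414. \<exists>c. is_coloring 3 N c \<and> \<not> mono_double_3AP c N)"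
proof -
  have "is_coloring 3 N col413 \<and> \<not> mono_double_3AP col413 N" if "N < 414" for N
    using that is_coloring_mono[OF is_coloring_col413] not_mono_double_3AP_col413
      mono_double_3AP_mono[of col413 N 413] by auto
  then show ?thesis
    using length_word413 is_coloring_col413 not_mono_double_3AP_col413 by blast
qed

end
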